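(* Let $\mathcal{G}=(\mathcal{V},E)$ be an undirected graph with $\mathcal{V}=\{1,\dots,N\}$ and set of cliques $\mathcal{C}$. For each $i$ let $\mathcal{X}_i$ be a finite alphabet and $g_i:\mathcal{X}_i\to\mathcal{Y}_i$ a function, and let $g=(g_1,\dots,g_N)$ act coordinatewise on $\mathcal{X}=\prod_i\mathcal{X}_i$. Let $X$ be a random variable on $\mathcal{X}$ with $p_X(x)>0$ for all $x$ and $p_X(x)=\frac{1}{Z}\prod_{C\in\mathcal{C}}\psi_C(x)$, $Z=\sum_{x}\prod_{C}\psi_C(x)$, for a family of potentials $\{\psi_C,\ C\in\mathcal{C}\}$. Assume that for every $C\in\mathcal{C}$ and every $y$, $\psi_C(x)=\psi_C(x')$ for all $x,x'\in g^{-1}(y)$. Let $Y=g(X)$. Then for every choice of map $C':\mathcal{V}\to\mathcal{C}$ with $i\in C'(i)$ for all $i$, letting $\mathcal{V}_1,\dots,\mathcal{V}_L$ be the classes of vertices with equal $C'(i)$ and $C'(\mathcal{V}_\ell)$ the common clique, $Y$ is a Markov random field on $\mathcal{G}$ with $p_Y(y)=\frac1Z\prod_{C\in\mathcal{C}}U_C(y)$, where $$U_{C'(\mathcal{V}_\ell)}(g(x))=\big|g_{\mathcal{V}_\ell}^{-1}(g_{\mathcal{V}_\ell}(x_{\mathcal{V}_\ell}))\big|\cdot\psi_{C'(\mathcal{V}_\ell)}(x),\quad \ell=1,\dots,L,$$ and $U_C(g(x))=\psi_C(x)$ for all other cliques $C$.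
   Context: A clique is a singleton or a set of pairwise adjacent vertices. For $A\subseteq\mathcal{V}$, $x_A=(x_i,i\in A)$ and $g_A(x_A)=(g_i(x_i),i\in A)$; $g_A^{-1}(\cdot)$ denotes the preimage in $\prod_{i\in A}\mathcal{X}_i$. A potential $\psi_C$ on $\prod_{i\in C}\mathcal{X}_i$ is regarded as a function on $\mathcal{X}$ via $\psi_C(x)=\psi_C(x_C)$. $X$ (resp. $Y$) is a Markov random field on $\mathcal{G}$ if for every $i$ the conditional law of its $i$-th coordinate given all other coordinates equals that given the coordinates at the neighbors $\mathcal{N}_i$ of $i$. *)

theory Defs
  imports Complex_Main "HOL-Library.FuncSet"
begin

definition is_clique :: "'v set \<Rightarrow> ('v \<Rightarrow> 'v \<Rightarrow> bool) \<Rightarrow> 'v set \<Rightarrow> bool" where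
  "is_clique V E C \<longleftrightarrow> C \<subseteq> V \<and> C \<noteq> {} \<and> (\<forall>a\<in>C. \<forall>b\<in>C. a \<noteq> b \<longrightarrow> E a b)"

definition cliques :: "'v set \<Rightarrow> ('v \<Rightarrow> 'v \<Rightarrow> bool) \<Rightarrow> 'v set set" where
  "cliques V E = {C. is_clique V E C}"

definition nbrs :: "'v set \<Rightarrow> ('v \<Rightarrow> 'v \<Rightarrow> bool) \<Rightarrow> 'v \<Rightarrow> 'v set" where
  "nbrs V E i = {j\<in>V. E i j}"

definition gmap :: "'v set \<Rightarrow> ('v \<Rightarrow> 'a \<Rightarrow> 'b) \<Rightarrow> ('v \<Rightarrow> 'a) \<Rightarrow> ('v \<Rightarrow> 'b)" where
  "gmap V g x = restrict (\<lambda>i. g i (x i)) V"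

definition gibbs_weight :: "'v set \<Rightarrow> ('v \<Rightarrow> 'v \<Rightarrow> bool) \<Rightarrow> ('v set \<Rightarrow> ('v \<Rightarrow> 'a) \<Rightarrow> real) \<Rightarrow> ('v \<Rightarrow> 'a) \<Rightarrow> real" where
  "gibbs_weight V E \<psi> x = (\<Prod>C\<in>cliques V E. \<psi> C (restrict x C))"

definition partition_fn :: "'v set \<Rightarrow> ('v \<Rightarrow> 'v \<Rightarrow> bool) \<Rightarrow> ('v \<Rightarrow> 'a set) \<Rightarrow> ('v set \<Rightarrow> ('v \<Rightarrow> 'a) \<Rightarrow> real) \<Rightarrow> real" where
  "partition_fn V E X \<psi> = (\<Sum>x\<in>PiE V X. gibbs_weight V E \<psi> x)"

definition gibbs_pmf :: "'v set \<Rightarrow> ('v \<Rightarrow> 'v \<Rightarrow> bool) \<Rightarrow> ('v \<Rightarrow> 'a set) \<Rightarrow> ('v set \<Rightarrow> ('v \<Rightarrow> 'a) \<Rightarrow> real) \<Rightarrow> ('v \<Rightarrow> 'a) \<Rightarrow> real" where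
  "gibbs_pmf V E X \<psi> x = gibbs_weight V E \<psi> x / partition_fn V E X \<psi>"

definition pushforward :: "'v set \<Rightarrow> ('v \<Rightarrow> 'a set) \<Rightarrow> ('v \<Rightarrow> 'a \<Rightarrow> 'b) \<Rightarrow> (('v \<Rightarrow> 'a) \<Rightarrow> real) \<Rightarrow> ('v \<Rightarrow> 'b) \<Rightarrow> real" where
  "pushforward V X g p y = (\<Sum>x\<in>{x\<in>PiE V X. gmap V g x = y}. p x)"

definition marg :: "(('v \<Rightarrow> 'b) \<Rightarrow> real) \<Rightarrow> ('v \<Rightarrow> 'b) set \<Rightarrow> 'v set \<Rightarrow> ('v \<Rightarrow> 'b) \<Rightarrow> real" where
  "marg p S A z = (\<Sum>y\<in>{y\<in>S. restrict y A = z}. p y)"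

definition cond_prob :: "(('v \<Rightarrow> 'b) \<Rightarrow> real) \<Rightarrow> ('v \<Rightarrow> 'b) set \<Rightarrow> 'v \<Rightarrow> 'v set \<Rightarrow> ('v \<Rightarrow> 'b) \<Rightarrow> real" where
  "cond_prob p S i A y = marg p S (insert i A) (restrict y (insert i A)) / marg p S A (restrict y A)"

definition markov_rf :: "'v set \<Rightarrow> ('v \<Rightarrow> 'v \<Rightarrow> bool) \<Rightarrow> ('v \<Rightarrow> 'b set) \<Rightarrow> (('v \<Rightarrow> 'b) \<Rightarrow> real) \<Rightarrow> bool" where
  "markov_rf V E Y p \<longleftrightarrow>
     (\<forall>i\<in>V. \<forall>y\<in>PiE V Y. marg p (PiE V Y) (V - {i}) (restrict y (V - {i})) > 0 \<longrightarrow>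
        cond_prob p (PiE V Y) i (V - {i}) y = cond_prob p (PiE V Y) i (nbrs V E i) y)"

end

theory Submission
  imports Defs
begin

(* Since every potential is constant on the fibres of g, so is the Gibbs weight, hence
   p_Y(g x) = |g^-1(g x)| * p_X(x). The fibre is the product of the coordinate fibres
   g_j^-1(g_j(x_j)); charging the factor of vertex j to the clique C'(j) writes p_Y as a
   product of clique potentials U_C evaluated at y. A positive product of clique potentials
   is a Markov random field: in the conditional law of Y_i given Y_A, for N_i <= A <= V - {i},
   the cliques not containing i contribute the same factor to numerator and denominator, so
   the conditional law is the same for A = N_i and A = V - {i}. *)

lemma restrict_eq_restrict_iff: "restrict f A = restrict g A \<longleftrightarrow> (\<forall>j\<in>A. f j = g j)"
  by (auto simp: restrict_def fun_eq_iff)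

lemma PiE_fun_upd_mem: "i \<in> V \<Longrightarrow> z \<in> PiE V Y \<Longrightarrow> t \<in> Y i \<Longrightarrow> z(i := t) \<in> PiE V Y"
  using PiE_fun_upd[of t Y i z V] by (simp add: insert_absorb)

lemma PiE_Collect_coordinatewise:
  "{z \<in> PiE W X. \<forall>j\<in>W. P j (z j)} = PiE W (\<lambda>j. {a \<in> X j. P j a})"
  by (auto simp: PiE_iff extensional_def)

lemma card_PiE_Collect_coordinatewise:
  "finite W \<Longrightarrow> card {z \<in> PiE W X. \<forall>j\<in>W. P j (z j)} = (\<Prod>j\<in>W. card {a \<in> X j. P j a})"
  by (simp add: PiE_Collect_coordinatewise card_PiE)

definition depends_only_on :: "(('v \<Rightarrow> 'b) \<Rightarrow> 'c) \<Rightarrow> 'v set \<Rightarrow> bool" where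
  "depends_only_on f D \<longleftrightarrow> (\<forall>y y'. (\<forall>j\<in>D. y j = y' j) \<longrightarrow> f y = f y')"

lemma depends_only_onD: "depends_only_on f D \<Longrightarrow> (\<And>j. j \<in> D \<Longrightarrow> y j = y' j) \<Longrightarrow> f y = f y'"
  unfolding depends_only_on_def by blast

lemma depends_only_on_restrict: "C \<subseteq> D \<Longrightarrow> depends_only_on (\<lambda>y. h (restrict y C)) D"
  unfolding depends_only_on_def
  by (auto simp: restrict_eq_restrict_iff subset_iff intro!: arg_cong[where f = h])

lemma depends_only_on_prod:
  "(\<And>C. C \<in> \<C> \<Longrightarrow> depends_only_on (f C) D) \<Longrightarrow> depends_only_on (\<lambda>y. \<Prod>C\<in>\<C>. f C y) D"
  unfolding depends_only_on_def by (blast intro: prod.cong)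

lemma depends_only_on_comp: "depends_only_on f D \<Longrightarrow> depends_only_on (\<lambda>y. h (f y)) D"
  unfolding depends_only_on_def by (blast intro: arg_cong)

lemma marg_split_coordinate:
  fixes p :: "('v \<Rightarrow> 'b) \<Rightarrow> real"
  assumes i: "i \<in> V" "i \<notin> A" and y: "y \<in> PiE V Y"
  shows "marg p (PiE V Y) A (restrict y A)
    = (\<Sum>t\<in>Y i. \<Sum>z\<in>{z \<in> PiE V Y. restrict z (insert i A) = restrict y (insert i A)}. p (z(i := t)))"
proof -
  define T where "T = {z \<in> PiE V Y. restrict z A = restrict y A}"
  define T' where "T' = {z \<in> PiE V Y. restrict z (insert i A) = restrict y (insert i A)}"
  have bij: "bij_betw (\<lambda>(t, z). z(i := t)) (Y i \<times> T') T"
    by (rule bij_betw_byWitness[where f' = "\<lambda>z. (z i, z(i := y i))"])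
      (use i y in \<open>auto simp: T_def T'_def restrict_eq_restrict_iff intro: PiE_fun_upd_mem\<close>)
  have "marg p (PiE V Y) A (restrict y A) = sum p T"
    by (simp add: marg_def T_def)
  also have "\<dots> = (\<Sum>(t, z)\<in>Y i \<times> T'. p (z(i := t)))"
    using sum.reindex_bij_betw[OF bij, of p] by (simp add: case_prod_beta')
  also have "\<dots> = (\<Sum>t\<in>Y i. \<Sum>z\<in>T'. p (z(i := t)))"
    by (rule sum.cartesian_product[symmetric])
  finally show ?thesis
    by (simp only: T'_def)
qed

lemma cond_prob_product_form:
  fixes p a b :: "('v \<Rightarrow> 'b) \<Rightarrow> real"
  assumes fin: "finite V" "\<forall>j\<in>V. finite (Y j)"
    and i: "i \<in> V" "i \<notin> A" and "N \<subseteq> A"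
    and p: "\<And>y. y \<in> PiE V Y \<Longrightarrow> p y = a y * b y"
    and pos: "\<And>y. y \<in> PiE V Y \<Longrightarrow> p y > 0"
    and a: "depends_only_on a (insert i N)" and b: "depends_only_on b (- {i})"
    and y: "y \<in> PiE V Y"
  shows "cond_prob p (PiE V Y) i A y = a y / (\<Sum>t\<in>Y i. a (y(i := t)))"
proof -
  define T where "T = {z \<in> PiE V Y. restrict z (insert i A) = restrict y (insert i A)}"
  define B where "B = (\<Sum>z\<in>T. b z)"
  have agree: "z j = y j" if "z \<in> T" "j \<in> insert i A" for z j
    using that by (auto simp: T_def restrict_eq_restrict_iff)
  have a_T: "a (z(i := t)) = a (y(i := t))" if "z \<in> T" for z t
    using \<open>N \<subseteq> A\<close> agree[OF that] by (intro depends_only_onD[OF a]) auto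
  have b_upd: "b (z(i := t)) = b z" for z t
    by (rule depends_only_onD[OF b]) simp
  have joint: "marg p (PiE V Y) (insert i A) (restrict y (insert i A)) = a y * B"
  proof -
    have "marg p (PiE V Y) (insert i A) (restrict y (insert i A)) = (\<Sum>z\<in>T. a z * b z)"
      by (simp add: marg_def T_def p)
    also have "\<dots> = (\<Sum>z\<in>T. a y * b z)"
      using a_T[where t = "y i"] agree by (intro sum.cong) (auto simp: fun_upd_idem)
    finally show ?thesis
      by (simp add: B_def sum_distrib_left)
  qed
  have cond: "marg p (PiE V Y) A (restrict y A) = (\<Sum>t\<in>Y i. a (y(i := t))) * B"
  proof -
    have "marg p (PiE V Y) A (restrict y A) = (\<Sum>t\<in>Y i. \<Sum>z\<in>T. p (z(i := t)))"
      unfolding T_def by (rule marg_split_coordinate[OF i y])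
    also have "\<dots> = (\<Sum>t\<in>Y i. \<Sum>z\<in>T. a (y(i := t)) * b z)"
      using i by (intro sum.cong refl) (auto simp: T_def p a_T b_upd PiE_fun_upd_mem)
    also have "\<dots> = (\<Sum>t\<in>Y i. a (y(i := t)) * B)"
      by (simp add: B_def sum_distrib_left)
    finally show ?thesis
      by (simp add: sum_distrib_right)
  qed
  have "0 < marg p (PiE V Y) (insert i A) (restrict y (insert i A))"
    unfolding marg_def using fin y pos by (intro sum_pos) (auto simp: finite_PiE)
  then have "B \<noteq> 0"
    using joint by auto
  then show ?thesis
    by (simp add: cond_prob_def joint cond)
qed

lemma finite_cliques: "finite V \<Longrightarrow> finite (cliques V E)"
  by (rule finite_subset[of _ "Pow V"]) (auto simp: cliques_def is_clique_def)

lemma markov_rf_if_clique_product: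
  fixes p :: "('v \<Rightarrow> 'b) \<Rightarrow> real" and \<phi> :: "'v set \<Rightarrow> ('v \<Rightarrow> 'b) \<Rightarrow> real"
  assumes fin: "finite V" "\<forall>j\<in>V. finite (Y j)" and irrefl: "\<forall>i. \<not> E i i"
    and pos: "\<And>y. y \<in> PiE V Y \<Longrightarrow> p y > 0"
    and p: "\<And>y. y \<in> PiE V Y \<Longrightarrow> p y = c * (\<Prod>C\<in>cliques V E. \<phi> C (restrict y C))"
  shows "markov_rf V E Y p"
  unfolding markov_rf_def
proof (intro ballI impI)
  fix i y assume i: "i \<in> V" and y: "y \<in> PiE V Y"
  define a where "a = (\<lambda>y. \<Prod>C\<in>{C \<in> cliques V E. i \<in> C}. \<phi> C (restrict y C))"
  define b where "b = (\<lambda>y. c * (\<Prod>C\<in>{C \<in> cliques V E. i \<notin> C}. \<phi> C (restrict y C)))"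
  have split: "cliques V E = {C \<in> cliques V E. i \<in> C} \<union> {C \<in> cliques V E. i \<notin> C}"
    by blast
  have "(\<Prod>C\<in>cliques V E. \<phi> C (restrict y C))
      = a y * (\<Prod>C\<in>{C \<in> cliques V E. i \<notin> C}. \<phi> C (restrict y C))" for y
    unfolding a_def by (subst split, rule prod.union_disjoint) (use finite_cliques[OF fin(1)] in auto)
  then have factor: "p y = a y * b y" if "y \<in> PiE V Y" for y
    using that by (simp add: p b_def)
  have a_dep: "depends_only_on a (insert i (nbrs V E i))"
    unfolding a_def
    by (intro depends_only_on_prod depends_only_on_restrict)
      (auto simp: cliques_def is_clique_def nbrs_def)
  have b_dep: "depends_only_on b (- {i})"
    unfolding b_def
    by (intro depends_only_on_comp[where h = "\<lambda>u. c * u"] depends_only_on_prod depends_only_on_restrict)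
      auto
  have nbrs: "nbrs V E i \<subseteq> V - {i}" "i \<notin> nbrs V E i"
    using irrefl by (auto simp: nbrs_def)
  show "cond_prob p (PiE V Y) i (V - {i}) y = cond_prob p (PiE V Y) i (nbrs V E i) y"
    using cond_prob_product_form[OF fin i _ nbrs(1) factor pos a_dep b_dep y]
      cond_prob_product_form[OF fin i(1) nbrs(2) order_refl factor pos a_dep b_dep y]
    by simp
qed

lemma gmap_eq_gmap_iff: "gmap V g x = gmap V g x' \<longleftrightarrow> (\<forall>j\<in>V. g j (x j) = g j (x' j))"
  by (simp add: gmap_def restrict_eq_restrict_iff)

lemma card_gmap_fibre:
  "finite V \<Longrightarrow> card {x' \<in> PiE V X. gmap V g x' = gmap V g x} = (\<Prod>j\<in>V. card {a \<in> X j. g j a = g j (x j)})"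
  using card_PiE_Collect_coordinatewise[of V X "\<lambda>j a. g j a = g j (x j)"]
  by (simp add: gmap_eq_gmap_iff)

lemma pushforward_gmap_pos:
  assumes "finite V" "\<forall>j\<in>V. finite (X j)" and "\<And>x. x \<in> PiE V X \<Longrightarrow> p x > 0" and "x \<in> PiE V X"
  shows "pushforward V X g p (gmap V g x) > 0"
  unfolding pushforward_def using assms by (intro sum_pos) (auto simp: finite_PiE)

lemma pushforward_gmap_fibre_constant:
  fixes p :: "('v \<Rightarrow> 'a) \<Rightarrow> real"
  assumes "\<And>x'. x' \<in> PiE V X \<Longrightarrow> gmap V g x' = gmap V g x \<Longrightarrow> p x' = p x"
  shows "pushforward V X g p (gmap V g x) = real (card {x' \<in> PiE V X. gmap V g x' = gmap V g x}) * p x"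
proof -
  have "pushforward V X g p (gmap V g x) = (\<Sum>x'\<in>{x' \<in> PiE V X. gmap V g x' = gmap V g x}. p x)"
    unfolding pushforward_def using assms by (intro sum.cong) auto
  then show ?thesis
    by simp
qed

definition potentials_respect_fibres ::
    "'v set \<Rightarrow> ('v \<Rightarrow> 'v \<Rightarrow> bool) \<Rightarrow> ('v \<Rightarrow> 'a set) \<Rightarrow> ('v \<Rightarrow> 'a \<Rightarrow> 'b) \<Rightarrow> ('v set \<Rightarrow> ('v \<Rightarrow> 'a) \<Rightarrow> real) \<Rightarrow> bool" where
  "potentials_respect_fibres V E X g \<psi> \<longleftrightarrow>
     (\<forall>C\<in>cliques V E. \<forall>x\<in>PiE V X. \<forall>x'\<in>PiE V X.
        gmap V g x = gmap V g x' \<longrightarrow> \<psi> C (restrict x C) = \<psi> C (restrict x' C))"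

lemma potentials_respect_fibresD:
  "potentials_respect_fibres V E X g \<psi> \<Longrightarrow> C \<in> cliques V E \<Longrightarrow> x \<in> PiE V X \<Longrightarrow> x' \<in> PiE V X
    \<Longrightarrow> gmap V g x = gmap V g x' \<Longrightarrow> \<psi> C (restrict x C) = \<psi> C (restrict x' C)"
  unfolding potentials_respect_fibres_def by blast

lemma gibbs_pmf_fibre_constant:
  assumes inv: "potentials_respect_fibres V E X g \<psi>"
    and x: "x \<in> PiE V X" "x' \<in> PiE V X" "gmap V g x' = gmap V g x"
  shows "gibbs_pmf V E X \<psi> x' = gibbs_pmf V E X \<psi> x"
proof -
  have "gibbs_weight V E \<psi> x' = gibbs_weight V E \<psi> x"
    unfolding gibbs_weight_def
    by (rule prod.cong[OF refl], rule potentials_respect_fibresD[OF inv]) (use x in auto)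
  then show ?thesis
    by (simp add: gibbs_pmf_def)
qed

definition fibre_pick :: "('v \<Rightarrow> 'a set) \<Rightarrow> ('v \<Rightarrow> 'a \<Rightarrow> 'b) \<Rightarrow> 'v \<Rightarrow> 'b \<Rightarrow> 'a" where
  "fibre_pick X g j b = (SOME a. a \<in> X j \<and> g j a = b)"

lemma fibre_pick:
  assumes "b \<in> g j ` X j"
  shows fibre_pick_mem: "fibre_pick X g j b \<in> X j" and fibre_pick_image: "g j (fibre_pick X g j b) = b"
proof -
  have "fibre_pick X g j b \<in> X j \<and> g j (fibre_pick X g j b) = b"
    unfolding fibre_pick_def by (rule someI_ex) (use assms in blast)
  then show "fibre_pick X g j b \<in> X j" "g j (fibre_pick X g j b) = b"
    by simp_all
qed

lemma gmap_fibre_pick: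
  assumes "y \<in> PiE V (\<lambda>j. g j ` X j)"
  shows "(\<lambda>j\<in>V. fibre_pick X g j (y j)) \<in> PiE V X" and "gmap V g (\<lambda>j\<in>V. fibre_pick X g j (y j)) = y"
proof -
  show "(\<lambda>j\<in>V. fibre_pick X g j (y j)) \<in> PiE V X"
    using assms by (auto simp: PiE_iff fibre_pick_mem)
  show "gmap V g (\<lambda>j\<in>V. fibre_pick X g j (y j)) = y"
    unfolding gmap_def by (rule ext) (use assms in \<open>auto simp: PiE_iff extensional_def fibre_pick_image\<close>)
qed

lemma gmap_in_PiE_image: "x \<in> PiE V X \<Longrightarrow> gmap V g x \<in> PiE V (\<lambda>j. g j ` X j)"
  by (auto simp: gmap_def PiE_iff)

(* The fibre count of vertex j is charged to the clique C' j, so the product is empty unless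
   C = C'(V_l) for some class V_l; psi C is read off at an arbitrary preimage of y, which is
   harmless on the image of g by potentials_respect_fibres. *)
definition image_potential ::
    "'v set \<Rightarrow> ('v \<Rightarrow> 'a set) \<Rightarrow> ('v \<Rightarrow> 'a \<Rightarrow> 'b) \<Rightarrow> ('v set \<Rightarrow> ('v \<Rightarrow> 'a) \<Rightarrow> real)
      \<Rightarrow> ('v \<Rightarrow> 'v set) \<Rightarrow> 'v set \<Rightarrow> ('v \<Rightarrow> 'b) \<Rightarrow> real" where
  "image_potential V X g \<psi> C' C y =
     (\<Prod>j\<in>{j \<in> V. C' j = C}. real (card {a \<in> X j. g j a = y j})) * \<psi> C (\<lambda>j\<in>C. fibre_pick X g j (y j))"

lemma image_potential_gmap:
  assumes inv: "potentials_respect_fibres V E X g \<psi>"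
    and C': "\<forall>i\<in>V. C' i \<in> cliques V E \<and> i \<in> C' i" and x: "x \<in> PiE V X" and C: "C \<in> cliques V E"
  shows "image_potential V X g \<psi> C' C (restrict (gmap V g x) C)
    = (\<Prod>j\<in>{j \<in> V. C' j = C}. real (card {a \<in> X j. g j a = g j (x j)})) * \<psi> C (restrict x C)"
proof -
  have CV: "C \<subseteq> V"
    using C by (simp add: cliques_def is_clique_def)
  define x' where "x' = (\<lambda>j\<in>V. fibre_pick X g j (gmap V g x j))"
  have x': "x' \<in> PiE V X" "gmap V g x' = gmap V g x"
    unfolding x'_def by (rule gmap_fibre_pick[OF gmap_in_PiE_image[OF x]])+
  have count: "(\<Prod>j\<in>{j \<in> V. C' j = C}. real (card {a \<in> X j. g j a = restrict (gmap V g x) C j}))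
      = (\<Prod>j\<in>{j \<in> V. C' j = C}. real (card {a \<in> X j. g j a = g j (x j)}))"
    by (rule prod.cong[OF refl]) (use C' in \<open>auto simp: gmap_def\<close>)
  have pick: "(\<lambda>j\<in>C. fibre_pick X g j (restrict (gmap V g x) C j)) = restrict x' C"
  proof (rule ext)
    fix j
    show "(\<lambda>j\<in>C. fibre_pick X g j (restrict (gmap V g x) C j)) j = restrict x' C j"
      using CV by (cases "j \<in> C") (auto simp: x'_def)
  qed
  have "\<psi> C (restrict x' C) = \<psi> C (restrict x C)"
    by (rule potentials_respect_fibresD[OF inv C x'(1) x x'(2)])
  then show ?thesis
    unfolding image_potential_def count pick by simp
qed

lemma prod_image_potential_gmap:
  assumes fin: "finite V" and inv: "potentials_respect_fibres V E X g \<psi>"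
    and C': "\<forall>i\<in>V. C' i \<in> cliques V E \<and> i \<in> C' i" and x: "x \<in> PiE V X"
  shows "(\<Prod>C\<in>cliques V E. image_potential V X g \<psi> C' C (restrict (gmap V g x) C))
    = real (card {x' \<in> PiE V X. gmap V g x' = gmap V g x}) * gibbs_weight V E \<psi> x"
proof -
  let ?n = "\<lambda>j. real (card {a \<in> X j. g j a = g j (x j)})"
  have "(\<Prod>C\<in>cliques V E. image_potential V X g \<psi> C' C (restrict (gmap V g x) C))
      = (\<Prod>C\<in>cliques V E. (\<Prod>j\<in>{j \<in> V. C' j = C}. ?n j) * \<psi> C (restrict x C))"
    by (rule prod.cong[OF refl]) (rule image_potential_gmap[OF inv C' x])
  also have "\<dots> = (\<Prod>C\<in>cliques V E. \<Prod>j\<in>{j \<in> V. C' j = C}. ?n j) * gibbs_weight V E \<psi> x"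
    by (simp add: prod.distrib gibbs_weight_def)
  also have "(\<Prod>C\<in>cliques V E. \<Prod>j\<in>{j \<in> V. C' j = C}. ?n j) = (\<Prod>j\<in>V. ?n j)"
    using C' by (intro prod.group fin finite_cliques) auto
  finally show ?thesis
    by (simp only: card_gmap_fibre[OF fin] of_nat_prod)
qed

lemma image_potential_gmap_card:
  assumes "finite V" and inv: "potentials_respect_fibres V E X g \<psi>"
    and C': "\<forall>i\<in>V. C' i \<in> cliques V E \<and> i \<in> C' i" and x: "x \<in> PiE V X" and C: "C \<in> cliques V E"
  shows "image_potential V X g \<psi> C' C (restrict (gmap V g x) C)
    = real (card {z \<in> PiE {j \<in> V. C' j = C} X. \<forall>j\<in>{j \<in> V. C' j = C}. g j (z j) = g j (x j)})
      * \<psi> C (restrict x C)"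
proof -
  have "card {z \<in> PiE {j \<in> V. C' j = C} X. \<forall>j\<in>{j \<in> V. C' j = C}. g j (z j) = g j (x j)}
      = (\<Prod>j\<in>{j \<in> V. C' j = C}. card {a \<in> X j. g j a = g j (x j)})"
    by (rule card_PiE_Collect_coordinatewise) (simp add: \<open>finite V\<close>)
  then show ?thesis
    by (simp only: image_potential_gmap[OF inv C' x C] of_nat_prod)
qed

lemma pushforward_gibbs_pmf_gmap:
  assumes "finite V"
    and inv: "potentials_respect_fibres V E X g \<psi>"
    and "\<forall>i\<in>V. C' i \<in> cliques V E \<and> i \<in> C' i" and x: "x \<in> PiE V X"
  shows "pushforward V X g (gibbs_pmf V E X \<psi>) (gmap V g x)
    = (\<Prod>C\<in>cliques V E. image_potential V X g \<psi> C' C (restrict (gmap V g x) C)) / partition_fn V E X \<psi>"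
proof -
  have "pushforward V X g (gibbs_pmf V E X \<psi>) (gmap V g x)
      = real (card {x' \<in> PiE V X. gmap V g x' = gmap V g x}) * gibbs_pmf V E X \<psi> x"
    by (rule pushforward_gmap_fibre_constant) (rule gibbs_pmf_fibre_constant[OF inv x])
  then show ?thesis
    using prod_image_potential_gmap[OF assms] by (simp add: gibbs_pmf_def)
qed

lemma markov_rf_pushforward_gibbs_pmf:
  assumes fin: "finite V" "\<forall>i\<in>V. finite (X i)" and irrefl: "\<forall>i. \<not> E i i"
    and pos: "\<forall>x\<in>PiE V X. gibbs_pmf V E X \<psi> x > 0"
    and inv: "potentials_respect_fibres V E X g \<psi>"
    and C': "\<forall>i\<in>V. C' i \<in> cliques V E \<and> i \<in> C' i"
  shows "markov_rf V E (\<lambda>i. g i ` X i) (pushforward V X g (gibbs_pmf V E X \<psi>))"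
proof (rule markov_rf_if_clique_product[where \<phi> = "image_potential V X g \<psi> C'"])
  show "finite V" "\<forall>j\<in>V. finite (g j ` X j)" "\<forall>i. \<not> E i i"
    using fin irrefl by auto
  fix y assume y: "y \<in> PiE V (\<lambda>i. g i ` X i)"
  define x where "x = (\<lambda>j\<in>V. fibre_pick X g j (y j))"
  have x: "x \<in> PiE V X" and y_eq: "y = gmap V g x"
    unfolding x_def using gmap_fibre_pick[OF y] by simp_all
  show "pushforward V X g (gibbs_pmf V E X \<psi>) y > 0"
    unfolding y_eq using fin pos x by (intro pushforward_gmap_pos) auto
  show "pushforward V X g (gibbs_pmf V E X \<psi>) y
      = 1 / partition_fn V E X \<psi> * (\<Prod>C\<in>cliques V E. image_potential V X g \<psi> C' C (restrict y C))"
    unfolding y_eq using pushforward_gibbs_pmf_gmap[OF fin(1) inv C' x] by simp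
qed

theorem corollary1:
  fixes N :: nat and E :: "nat \<Rightarrow> nat \<Rightarrow> bool"
    and X :: "nat \<Rightarrow> 'a set" and g :: "nat \<Rightarrow> 'a \<Rightarrow> 'b"
    and \<psi> :: "nat set \<Rightarrow> (nat \<Rightarrow> 'a) \<Rightarrow> real"
    and C' :: "nat \<Rightarrow> nat set"
  assumes sym: "\<forall>i j. E i j \<longrightarrow> E j i"
    and irrefl: "\<forall>i. \<not> E i i"
    and fin: "\<forall>i\<in>{1..N}. finite (X i)"
    and pos: "\<forall>x\<in>PiE {1..N} X. gibbs_pmf {1..N} E X \<psi> x > 0"
    and inv: "\<forall>C\<in>cliques {1..N} E. \<forall>x\<in>PiE {1..N} X. \<forall>x'\<in>PiE {1..N} X.
                gmap {1..N} g x = gmap {1..N} g x' \<longrightarrow> \<psi> C (restrict x C) = \<psi> C (restrict x' C)"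
    and C'_clique: "\<forall>i\<in>{1..N}. C' i \<in> cliques {1..N} E \<and> i \<in> C' i"
  shows "markov_rf {1..N} E (\<lambda>i. g i ` X i)
           (pushforward {1..N} X g (gibbs_pmf {1..N} E X \<psi>))
       \<and> (\<exists>U :: nat set \<Rightarrow> (nat \<Rightarrow> 'b) \<Rightarrow> real.
            \<forall>x\<in>PiE {1..N} X.
              pushforward {1..N} X g (gibbs_pmf {1..N} E X \<psi>) (gmap {1..N} g x)
                = (\<Prod>C\<in>cliques {1..N} E. U C (restrict (gmap {1..N} g x) C))
                  / partition_fn {1..N} E X \<psi>
            \<and> (\<forall>C\<in>C' ` {1..N}.
                 U C (restrict (gmap {1..N} g x) C)
                   = real (card {z\<in>PiE {j\<in>{1..N}. C' j = C} X.
                                  \<forall>j\<in>{j\<in>{1..N}. C' j = C}. g j (z j) = g j (x j)})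
                     * \<psi> C (restrict x C))
            \<and> (\<forall>C\<in>cliques {1..N} E - C' ` {1..N}.
                 U C (restrict (gmap {1..N} g x) C) = \<psi> C (restrict x C)))"
proof -
  have fin_V: "finite {1..N}" "\<forall>i\<in>{1..N}. finite (X i)"
    using fin by simp_all
  have respects: "potentials_respect_fibres {1..N} E X g \<psi>"
    using inv unfolding potentials_respect_fibres_def .
  show ?thesis
  proof (intro conjI exI[where x = "image_potential {1..N} X g \<psi> C'"] ballI)
    show "markov_rf {1..N} E (\<lambda>i. g i ` X i) (pushforward {1..N} X g (gibbs_pmf {1..N} E X \<psi>))"
      by (rule markov_rf_pushforward_gibbs_pmf[OF fin_V irrefl pos respects C'_clique])
  next
    fix x assume x: "x \<in> PiE {1..N} X"
    then show "pushforward {1..N} X g (gibbs_pmf {1..N} E X \<psi>) (gmap {1..N} g x)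
        = (\<Prod>C\<in>cliques {1..N} E. image_potential {1..N} X g \<psi> C' C (restrict (gmap {1..N} g x) C))
          / partition_fn {1..N} E X \<psi>"
      by (rule pushforward_gibbs_pmf_gmap[OF fin_V(1) respects C'_clique])
    fix C assume "C \<in> C' ` {1..N}"
    then show "image_potential {1..N} X g \<psi> C' C (restrict (gmap {1..N} g x) C)
        = real (card {z \<in> PiE {j \<in> {1..N}. C' j = C} X. \<forall>j\<in>{j \<in> {1..N}. C' j = C}. g j (z j) = g j (x j)})
          * \<psi> C (restrict x C)"
      using C'_clique by (intro image_potential_gmap_card[OF fin_V(1) respects C'_clique x]) blast
  next
    fix x C assume x: "x \<in> PiE {1..N} X" and C: "C \<in> cliques {1..N} E - C' ` {1..N}"
    then have C_clique: "C \<in> cliques {1..N} E" and no_class: "{j \<in> {1..N}. C' j = C} = {}"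
      by blast+
    show "image_potential {1..N} X g \<psi> C' C (restrict (gmap {1..N} g x) C) = \<psi> C (restrict x C)"
      unfolding image_potential_gmap_card[OF fin_V(1) respects C'_clique x C_clique] no_class by simp
  qed
qed

end
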